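(* Let $a_1,\dots,a_k>0$, let $K,L>0$, and let $Q_+=\{u\in\mathbb{C}:\mathrm{Re}\,u<-L,\ \mathrm{Im}\,u>-K\}$, $Q_-=\{u\in\mathbb{C}:\mathrm{Re}\,u<-L,\ \mathrm{Im}\,u<K\}$. Let $f$ be holomorphic on $Q_\pm$ with $|f(u)|\le M|u|^{-A}$ on $Q_\pm$ for some constant $M$, and assume $A>k$. Then the series $$F_\pm(u)=(\mp1)^k\sum_{m_1,\dots,m_k>0}f\Big(u\pm2\pi i(a_1m_1+\cdots+a_km_k)\mp\pi i(a_1+\cdots+a_k)\Big)$$ converges and solves on $Q_\pm$ the difference equation $\Delta_{a_1,\dots,a_k}F_\pm=f$. Moreover, for every $B<A-k$ there is a constant $M_{A-k-B}$ such that $|F_\pm(u)|\le M_{A-k-B}|u|^{-B}$ on $Q_\pm$.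
   Context: $\Delta_af(u)=f(u+ia\pi)-f(u-ia\pi)$ and $\Delta_{a_1,\dots,a_k}=\Delta_{a_1}\circ\cdots\circ\Delta_{a_k}$. *)

theory Defs
  imports "HOL-Complex_Analysis.Complex_Analysis"
begin

definition Delta :: "real \<Rightarrow> (complex \<Rightarrow> complex) \<Rightarrow> complex \<Rightarrow> complex" where
  "Delta a f u = f (u + \<i> * of_real (a * pi)) - f (u - \<i> * of_real (a * pi))"

fun DeltaL :: "real list \<Rightarrow> (complex \<Rightarrow> complex) \<Rightarrow> complex \<Rightarrow> complex" where
  "DeltaL [] f = f"
| "DeltaL (a # as) f = Delta a (DeltaL as f)"

text \<open>Q_+ (sigma = 1) and Q_- (sigma = -1).\<close>
definition Qreg :: "real \<Rightarrow> real \<Rightarrow> real \<Rightarrow> complex set" where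
  "Qreg \<sigma> K L = {u. Re u < - L \<and> \<sigma> * Im u > - K}"

definition PosTuples :: "nat \<Rightarrow> (nat \<Rightarrow> nat) set" where
  "PosTuples k = PiE {..<k} (\<lambda>_. {0<..})"

definition Fsol :: "real \<Rightarrow> real list \<Rightarrow> (complex \<Rightarrow> complex) \<Rightarrow> complex \<Rightarrow> complex" where
  "Fsol \<sigma> as f u = of_real ((- \<sigma>) ^ length as) *
     infsum (\<lambda>m. f (u + of_real \<sigma> * 2 * of_real pi * \<i> * of_real (\<Sum>j<length as. as ! j * real (m j))
                     - of_real \<sigma> * of_real pi * \<i> * of_real (\<Sum>j<length as. as ! j)))
            (PosTuples (length as))"

end

theory Submission
  imports Defs
begin

text \<open>All points \<open>u + \<sigma>\<pi>\<i>\<Sum>\<^sub>j a\<^sub>j(2m\<^sub>j - 1)\<close> lie in \<open>Q\<^sub>\<sigma>\<close>, where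
  \<open>|u| + t \<le> (2 + 2K/L)|u + \<i>\<sigma>t|\<close>; so \<open>|f|\<close> there is at most a constant times
  \<open>(|u| + \<pi>\<Sum>\<^sub>j a\<^sub>j(2m\<^sub>j - 1))\<^sup>-\<^sup>A\<close>. Splitting \<open>A = r + kq\<close> with \<open>q > 1\<close> and
  \<open>r \<ge> B\<close> dominates the \<open>k\<close>-fold series by \<open>|u|\<^sup>-\<^sup>r\<close> times a product of convergent
  one-dimensional series, which gives absolute convergence and the decay bound.

  The difference equation follows by induction on the list of steps: \<open>\<Delta>\<^sub>a\<close> commutes with the
  other operators, \<open>\<Delta>\<^sub>a\<^sub>s\<close> only sees values at the vertices \<open>u + \<pi>\<i>\<Sum>\<^sub>j \<plusminus>a\<^sub>j\<close>, and at each
  vertex summing out the first index turns \<open>\<Delta>\<^sub>a F\<^sub>a\<^sub>#\<^sub>a\<^sub>s\<close> into \<open>F\<^sub>a\<^sub>s\<close> by telescoping.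
  The estimate above also covers these vertices.\<close>

lemma powr_neg_le_mult_powr_neg:
  fixes L x B r :: real
  assumes "0 < L" "L \<le> x" "B \<le> r"
  shows "x powr (-r) \<le> L powr (B - r) * x powr (-B)"
proof -
  have "x powr (-r) = x powr (B - r) * x powr (-B)"
    by (simp flip: powr_add)
  also have "\<dots> \<le> L powr (B - r) * x powr (-B)"
    using assms by (intro mult_right_mono powr_mono2') auto
  finally show ?thesis .
qed

lemma powr_neg_add_mult_split:
  fixes x r q :: real and k :: nat
  assumes "x > 0"
  shows "x powr (-(r + k * q)) = x powr (-r) * (\<Prod>j<k. x powr (-q))"
proof -
  have "x powr (-(r + k * q)) = x powr (-r) * (x powr (-q)) powr k"
    by (simp add: powr_powr mult.commute flip: powr_add)
  thus ?thesis using assms by (simp add: powr_realpow)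
qed

lemma summable_on_powr_affine:
  fixes L \<alpha> q :: real
  assumes "L > 0" "\<alpha> > 0" "q > 1"
  shows "(\<lambda>n::nat. (L + \<alpha> * real n) powr (-q)) summable_on UNIV"
proof (rule summable_nonneg_imp_summable_on)
  have "summable (\<lambda>n::nat. \<alpha> powr (-q) * real n powr (-q))"
    using assms by (intro summable_mult) (simp add: summable_real_powr_iff)
  moreover have "norm ((L + \<alpha> * real n) powr (-q)) \<le> \<alpha> powr (-q) * real n powr (-q)" if "n \<ge> 1" for n :: nat
  proof -
    have "(L + \<alpha> * real n) powr (-q) \<le> (\<alpha> * real n) powr (-q)"
      using assms that by (intro powr_mono2') auto
    thus ?thesis using assms by (simp add: powr_mult)
  qed
  ultimately show "summable (\<lambda>n::nat. (L + \<alpha> * real n) powr (-q))"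
    by (metis (no_types, lifting) eventually_sequentiallyI summable_comparison_test_ev)
qed simp

lemma infsum_pred_shift:
  fixes g :: "nat \<Rightarrow> 'a::banach"
  assumes "(\<lambda>n. g (n - 1)) summable_on {0<..}"
  shows "(\<Sum>\<^sub>\<infinity>n\<in>{0<..}. g (n - 1)) = g 0 + (\<Sum>\<^sub>\<infinity>n\<in>{0<..}. g n)"
proof -
  have Suc_image: "{0<..} = range Suc" by (rule greaterThan_0)
  have g: "g summable_on UNIV"
    using assms unfolding Suc_image by (subst (asm) summable_on_reindex) (auto simp: o_def)
  have "(\<Sum>\<^sub>\<infinity>n\<in>{0<..}. g (n - 1)) = infsum g UNIV"
    unfolding Suc_image by (subst infsum_reindex) (auto simp: o_def)
  also have "UNIV = insert 0 {0::nat<..}" by auto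
  also have "infsum g (insert 0 {0<..}) = g 0 + infsum g {0<..}"
    using summable_on_subset_banach[OF g] by (intro infsum_insert) auto
  finally show ?thesis .
qed

lemma abs_summable_on_inj_image:
  fixes F :: "'a \<Rightarrow> 'c::real_normed_vector"
  assumes inj: "inj_on \<phi> I" and sub: "\<phi> ` I \<subseteq> J" and sm: "(\<lambda>n. norm (F n)) summable_on J"
  shows "(\<lambda>m. norm (F (\<phi> m))) summable_on I"
    and "(\<Sum>\<^sub>\<infinity>m\<in>I. norm (F (\<phi> m))) \<le> (\<Sum>\<^sub>\<infinity>n\<in>J. norm (F n))"
proof -
  have sm_image: "(\<lambda>n. norm (F n)) summable_on \<phi> ` I" using sm sub by (rule summable_on_subset)
  thus "(\<lambda>m. norm (F (\<phi> m))) summable_on I"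
    using summable_on_reindex[OF inj, of "\<lambda>n. norm (F n)"] by (simp add: o_def)
  have "(\<Sum>\<^sub>\<infinity>m\<in>I. norm (F (\<phi> m))) = (\<Sum>\<^sub>\<infinity>n\<in>\<phi> ` I. norm (F n))"
    using infsum_reindex[OF inj, of "\<lambda>n. norm (F n)"] by (simp add: o_def)
  also have "\<dots> \<le> (\<Sum>\<^sub>\<infinity>n\<in>J. norm (F n))"
    using sm_image sm sub by (intro infsum_mono_neutral) auto
  finally show "(\<Sum>\<^sub>\<infinity>m\<in>I. norm (F (\<phi> m))) \<le> (\<Sum>\<^sub>\<infinity>n\<in>J. norm (F n))" .
qed

lemma Qreg_shift:
  assumes "\<sigma> \<in> {1,-1}" "u \<in> Qreg \<sigma> K L" "t \<ge> 0"
  shows "u + \<i> * of_real (\<sigma> * t) \<in> Qreg \<sigma> K L"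
  using assms by (auto simp: Qreg_def)

lemma norm_gt_of_Qreg: "u \<in> Qreg \<sigma> K L \<Longrightarrow> L < norm u"
  unfolding Qreg_def using abs_Re_le_cmod[of u] by auto

lemma Qreg_bound_coeff_nonneg:
  assumes "u \<in> Qreg \<sigma> K L" "L > 0" "norm (f u) \<le> M * norm u powr (-A)"
  shows "M \<ge> 0"
proof -
  have "norm u > 0" using norm_gt_of_Qreg[OF assms(1)] assms(2) by linarith
  hence "norm u powr (-A) > 0" by simp
  moreover have "0 \<le> M * norm u powr (-A)" using assms(3) norm_ge_zero order_trans by blast
  ultimately show ?thesis by (simp add: zero_le_mult_iff)
qed

lemma norm_add_le_norm_Qreg_shift:
  assumes s: "\<sigma> \<in> {1,-1}" and K: "K > 0" and L: "L > 0" and u: "u \<in> Qreg \<sigma> K L" and t: "t \<ge> 0"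
  shows "norm u + t \<le> (2 + 2*K/L) * norm (u + \<i> * of_real (\<sigma> * t))"
proof -
  define w where "w = u + \<i> * of_real (\<sigma> * t)"
  have Rw: "Re w = Re u" and Iw: "Im w = Im u + \<sigma> * t" by (auto simp: w_def)
  have Im_w: "\<bar>Im u\<bar> + t \<le> \<bar>Im w\<bar> + 2*K"
    using s u t K unfolding Iw Qreg_def by (auto simp: abs_if)
  have "2*K = (2*K/L) * L" using L by simp
  also have "\<dots> \<le> (2*K/L) * \<bar>Re u\<bar>" using u K L unfolding Qreg_def by (intro mult_left_mono) auto
  finally have K_le: "2*K \<le> (2*K/L) * \<bar>Re u\<bar>" .
  have "norm u + t \<le> \<bar>Re u\<bar> + \<bar>Im w\<bar> + 2*K" using cmod_le[of u] Im_w by linarith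
  also have "\<dots> \<le> (1 + 2*K/L) * \<bar>Re u\<bar> + \<bar>Im w\<bar>" using K_le by (simp add: distrib_right)
  also have "\<dots> \<le> (1 + 2*K/L) * norm w + norm w"
    using Rw K L abs_Re_le_cmod[of w] abs_Im_le_cmod[of w] by (intro add_mono mult_left_mono) auto
  also have "\<dots> = (2 + 2*K/L) * norm w" by (simp add: algebra_simps)
  finally show ?thesis unfolding w_def .
qed

definition NatTuples :: "nat \<Rightarrow> (nat \<Rightarrow> nat) set" where
  "NatTuples k = PiE {..<k} (\<lambda>_. UNIV)"

lemma prod_NatTuples:
  fixes h :: "nat \<Rightarrow> real"
  assumes h: "h summable_on UNIV" and h_nonneg: "\<And>n. h n \<ge> 0"
  shows "(\<lambda>n. \<Prod>j<k. h (n j)) summable_on NatTuples k"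
    and "(\<Sum>\<^sub>\<infinity>n\<in>NatTuples k. \<Prod>j<k. h (n j)) = (infsum h UNIV) ^ k"
proof -
  have abs_h: "(\<lambda>n. norm (h n)) summable_on UNIV" using h h_nonneg by simp
  hence "Infinite_Set_Sum.abs_summable_on h UNIV" by (rule abs_summable_equivalent[THEN iffD1])
  hence "Infinite_Set_Sum.abs_summable_on (\<lambda>n. \<Prod>j<k. h (n j)) (NatTuples k)"
    unfolding NatTuples_def by (intro abs_summable_on_prod_PiE) auto
  hence "(\<lambda>n. norm (\<Prod>j<k. h (n j))) summable_on NatTuples k"
    by (rule abs_summable_equivalent[THEN iffD2])
  thus "(\<lambda>n. \<Prod>j<k. h (n j)) summable_on NatTuples k" by (rule abs_summable_summable)
  have "(\<Sum>\<^sub>\<infinity>n\<in>NatTuples k. \<Prod>j<k. h (n j)) = (\<Prod>j<k. infsum h UNIV)"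
    unfolding NatTuples_def using abs_h by (intro infsum_prod_PiE_abs) auto
  thus "(\<Sum>\<^sub>\<infinity>n\<in>NatTuples k. \<Prod>j<k. h (n j)) = (infsum h UNIV) ^ k" by simp
qed

definition lattice_point :: "real \<Rightarrow> real list \<Rightarrow> complex \<Rightarrow> (nat \<Rightarrow> nat) \<Rightarrow> complex" where
  "lattice_point \<sigma> bs u n = u + \<i> * of_real (\<sigma> * (pi * (\<Sum>j<length bs. bs!j * real (n j))))"

lemma lattice_weight_bounds:
  assumes c: "c > 0" "\<forall>b\<in>set bs. c \<le> b"
  shows "0 \<le> pi * (\<Sum>j<length bs. bs!j * real (n j))"
    and "j < length bs \<Longrightarrow> pi * c * real (n j) \<le> pi * (\<Sum>j<length bs. bs!j * real (n j))"
proof -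
  have c_le: "c \<le> bs!j" if "j < length bs" for j using c(2) that by simp
  have nonneg: "0 \<le> bs!j * real (n j)" if "j < length bs" for j
    using c_le[OF that] c(1) by simp
  have "(\<Sum>j<length bs. bs!j * real (n j)) \<ge> 0" by (rule sum_nonneg) (simp add: nonneg)
  thus "0 \<le> pi * (\<Sum>j<length bs. bs!j * real (n j))" by simp
  assume j: "j < length bs"
  have "c * real (n j) \<le> bs!j * real (n j)" using c_le j by (intro mult_right_mono) auto
  also have "\<dots> \<le> (\<Sum>j<length bs. bs!j * real (n j))"
    using j nonneg by (intro member_le_sum) auto
  finally show "pi * c * real (n j) \<le> pi * (\<Sum>j<length bs. bs!j * real (n j))" by simp
qed

lemma lattice_term_bound:
  fixes f :: "complex \<Rightarrow> complex" and bs :: "real list" and q r :: real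
  assumes s: "\<sigma> \<in> {1,-1}" and K: "K > 0" and L: "L > 0"
    and fb: "\<forall>u\<in>Qreg \<sigma> K L. norm (f u) \<le> M * norm u powr (-(r + length bs * q))"
    and c: "c > 0" "\<forall>b\<in>set bs. c \<le> b" and q: "q \<ge> 0" and r: "r \<ge> 0"
    and u: "u \<in> Qreg \<sigma> K L"
  shows "norm (f (lattice_point \<sigma> bs u n))
      \<le> M * (2 + 2*K/L) powr (r + length bs * q) * norm u powr (-r)
          * (\<Prod>j<length bs. (L + pi * c * real (n j)) powr (-q))"
proof -
  define k where "k = length bs"
  define A where "A = r + k * q"
  define D where "D = 2 + 2*K/L"
  have D: "D > 0" using K L unfolding D_def by (simp add: add_pos_nonneg)
  have M: "M \<ge> 0" using Qreg_bound_coeff_nonneg[OF u L] fb u by blast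
  have A_nonneg: "A \<ge> 0" unfolding A_def using r q by simp
  have nu: "norm u > L" using norm_gt_of_Qreg[OF u] .
  define T where "T = pi * (\<Sum>j<k. bs!j * real (n j))"
  have T: "T \<ge> 0" using lattice_weight_bounds(1)[OF c] unfolding T_def k_def .
  have T_ge: "T \<ge> pi * c * real (n j)" if "j < k" for j
    using lattice_weight_bounds(2)[OF c] that unfolding T_def k_def .
  define w where "w = lattice_point \<sigma> bs u n"
  have w: "w = u + \<i> * of_real (\<sigma> * T)" unfolding w_def lattice_point_def T_def k_def ..
  define X where "X = norm u + T"
  have X_le: "X \<le> D * norm w" unfolding X_def w D_def using norm_add_le_norm_Qreg_shift[OF s K L u T] .
  have X: "X > 0" using nu L T unfolding X_def by linarith
  have "norm (f w) \<le> M * norm w powr (-A)" using fb Qreg_shift[OF s u T] unfolding w A_def k_def by blast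
  also have "\<dots> \<le> M * (X / D) powr (-A)"
    using X X_le D M A_nonneg by (intro mult_left_mono powr_mono2') (auto simp: field_simps)
  also have "(X / D) powr (-A) = D powr A * X powr (-A)"
    by (simp add: powr_divide powr_minus divide_simps)
  also have "X powr (-A) \<le> norm u powr (-r) * (\<Prod>j<k. (L + pi * c * real (n j)) powr (-q))"
    unfolding A_def powr_neg_add_mult_split[OF X]
  proof (intro mult_mono prod_mono conjI)
    show "X powr (-r) \<le> norm u powr (-r)" using r nu L T unfolding X_def by (intro powr_mono2') auto
    show "X powr (-q) \<le> (L + pi * c * real (n j)) powr (-q)" if "j \<in> {..<k}" for j
      using T_ge[of j] that nu q c L unfolding X_def by (intro powr_mono2') (auto intro: add_pos_nonneg)
  qed (auto simp: prod_nonneg)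
  finally show ?thesis unfolding w_def D_def A_def k_def using M D
    by (simp add: mult_left_mono mult.assoc)
qed

lemma lattice_sum_bound:
  fixes f :: "complex \<Rightarrow> complex" and bs :: "real list" and A B :: real
  assumes s: "\<sigma> \<in> {1,-1}" and K: "K > 0" and L: "L > 0"
    and fb: "\<forall>u\<in>Qreg \<sigma> K L. norm (f u) \<le> M * norm u powr (-A)"
    and pos: "\<forall>b\<in>set bs. b > 0" and A: "A > length bs" and B: "B < A - length bs"
  shows "\<exists>C. \<forall>u\<in>Qreg \<sigma> K L.
           (\<lambda>n. norm (f (lattice_point \<sigma> bs u n))) summable_on NatTuples (length bs)
         \<and> (\<Sum>\<^sub>\<infinity>n\<in>NatTuples (length bs). norm (f (lattice_point \<sigma> bs u n))) \<le> C * norm u powr (-B)"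
proof -
  define k where "k = length bs"
  define B' where "B' = max B 0"
  define q where "q = 1 + (A - k - B') / (k + 1)"
  define r where "r = A - k * q"
  have q: "q > 1" using A B unfolding q_def B'_def k_def by auto
  have "k * ((A - k - B') / (k + 1)) \<le> A - k - B'"
    using A B unfolding B'_def k_def by (simp add: field_simps)
  hence r: "r \<ge> B'" unfolding r_def q_def by (simp add: distrib_left)
  have A_split: "A = r + length bs * q" unfolding r_def k_def by simp
  define c where "c = Min (insert 1 (set bs))"
  have c: "c > 0" "\<forall>b\<in>set bs. c \<le> b" using pos unfolding c_def by auto
  define h where "h n = (L + pi * c * real n) powr (-q)" for n :: nat
  have h: "h summable_on UNIV" unfolding h_def using summable_on_powr_affine[OF L _ q] c by simp
  have h_nonneg: "h n \<ge> 0" for n unfolding h_def by simp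
  have S_nonneg: "infsum h UNIV \<ge> 0" using h_nonneg by (simp add: infsum_nonneg)
  define C where "C = \<bar>M\<bar> * (2 + 2*K/L) powr A * infsum h UNIV ^ k * L powr (B - r)"
  show ?thesis
  proof (intro exI ballI)
    fix u assume u: "u \<in> Qreg \<sigma> K L"
    define G where "G n = M * (2 + 2*K/L) powr A * norm u powr (-r) * (\<Prod>j<k. h (n j))" for n
    have M: "M \<ge> 0" using Qreg_bound_coeff_nonneg[OF u L] fb u by blast
    have f_le_G: "norm (f (lattice_point \<sigma> bs u n)) \<le> G n" for n
      unfolding G_def h_def k_def A_split
      using lattice_term_bound[OF s K L fb[unfolded A_split] c _ _ u] q r unfolding B'_def by simp
    have G: "G summable_on NatTuples k"
      unfolding G_def by (intro summable_on_cmult_right prod_NatTuples(1)[OF h h_nonneg])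
    have summable: "(\<lambda>n. norm (f (lattice_point \<sigma> bs u n))) summable_on NatTuples k"
      by (rule Infinite_Sum.abs_summable_on_comparison_test'[OF G f_le_G])
    have "(\<Sum>\<^sub>\<infinity>n\<in>NatTuples k. norm (f (lattice_point \<sigma> bs u n))) \<le> infsum G (NatTuples k)"
      using summable G f_le_G by (intro infsum_mono) auto
    also have "\<dots> = M * (2 + 2*K/L) powr A * infsum h UNIV ^ k * norm u powr (-r)"
      unfolding G_def by (simp add: infsum_cmult_right' prod_NatTuples(2)[OF h h_nonneg])
    also have "\<dots> \<le> M * (2 + 2*K/L) powr A * infsum h UNIV ^ k * (L powr (B - r) * norm u powr (-B))"
      using M S_nonneg norm_gt_of_Qreg[OF u] L r unfolding B'_def
      by (intro mult_left_mono powr_neg_le_mult_powr_neg) auto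
    finally show "(\<lambda>n. norm (f (lattice_point \<sigma> bs u n))) summable_on NatTuples (length bs)
        \<and> (\<Sum>\<^sub>\<infinity>n\<in>NatTuples (length bs). norm (f (lattice_point \<sigma> bs u n))) \<le> C * norm u powr (-B)"
      using summable M unfolding C_def k_def by (simp add: mult.assoc)
  qed
qed

definition Fsol_point :: "real \<Rightarrow> real list \<Rightarrow> complex \<Rightarrow> (nat \<Rightarrow> nat) \<Rightarrow> complex" where
  "Fsol_point \<sigma> as v m = v + of_real \<sigma> * 2 * of_real pi * \<i> * of_real (\<Sum>j<length as. as ! j * real (m j))
                     - of_real \<sigma> * of_real pi * \<i> * of_real (\<Sum>j<length as. as ! j)"

lemma Fsol_eq_infsum:
  "Fsol \<sigma> as f u = of_real ((- \<sigma>) ^ length as) * (\<Sum>\<^sub>\<infinity>m\<in>PosTuples (length as). f (Fsol_point \<sigma> as u m))"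
  unfolding Fsol_def Fsol_point_def ..

definition shift_point :: "real \<Rightarrow> real list \<Rightarrow> complex \<Rightarrow> (nat \<Rightarrow> int) \<Rightarrow> complex" where
  "shift_point \<sigma> bs u e = u + \<i> * of_real (\<sigma> * (pi * (\<Sum>j<length bs. bs!j * of_int (e j))))"

lemma shift_point_zero [simp]: "shift_point \<sigma> bs u (\<lambda>_. 0) = u"
  by (simp add: shift_point_def)

lemma shift_point_Cons:
  "shift_point \<sigma> (a # as) u (case_nat x e) = shift_point \<sigma> as (u + \<i> * of_real (\<sigma> * a * pi * of_int x)) e"
  unfolding shift_point_def length_Cons sum.lessThan_Suc_shift by (simp add: algebra_simps)

lemma PosTuples_ge_1: "m \<in> PosTuples k \<Longrightarrow> j < k \<Longrightarrow> m j \<ge> 1"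
  unfolding PosTuples_def by (auto simp: PiE_iff Suc_le_eq)

text \<open>The terms of \<open>Fsol\<close> at \<open>shift_point \<sigma> bs u e\<close> sit at the lattice points with coordinates
  \<open>2 m\<^sub>j - 1 + e\<^sub>j\<close>; for \<open>e\<^sub>j \<ge> -1\<close> these are natural numbers depending injectively on \<open>m\<close>.\<close>
definition odd_index :: "nat \<Rightarrow> (nat \<Rightarrow> int) \<Rightarrow> (nat \<Rightarrow> nat) \<Rightarrow> nat \<Rightarrow> nat" where
  "odd_index k e m = restrict (\<lambda>j. nat (2 * int (m j) - 1 + e j)) {..<k}"

lemma inj_on_odd_index:
  assumes "\<forall>j<k. e j \<ge> -1"
  shows "inj_on (odd_index k e) (PosTuples k)"
proof (rule inj_onI)
  fix m m' assume m: "m \<in> PosTuples k" and m': "m' \<in> PosTuples k" and eq: "odd_index k e m = odd_index k e m'"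
  show "m = m'"
  proof
    fix j show "m j = m' j"
    proof (cases "j < k")
      case True
      have "nat (2 * int (m j) - 1 + e j) = nat (2 * int (m' j) - 1 + e j)"
        using fun_cong[OF eq, of j] True by (simp add: odd_index_def)
      hence "2 * int (m j) - 1 + e j = 2 * int (m' j) - 1 + e j"
        using PosTuples_ge_1[OF m True] PosTuples_ge_1[OF m' True] assms True
        by (subst (asm) eq_nat_nat_iff) auto
      thus ?thesis by simp
    next
      case False
      thus ?thesis using m m' unfolding PosTuples_def by (auto simp: PiE_iff extensional_def)
    qed
  qed
qed

lemma odd_index_in_NatTuples: "odd_index k e m \<in> NatTuples k"
  unfolding odd_index_def NatTuples_def by simp

lemma Fsol_point_shift_point:
  assumes m: "m \<in> PosTuples (length bs)" and e: "\<forall>j<length bs. e j \<ge> -1"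
  shows "Fsol_point \<sigma> bs (shift_point \<sigma> bs u e) m = lattice_point \<sigma> bs u (odd_index (length bs) e m)"
proof -
  define k where "k = length bs"
  have "real (odd_index k e m j) = 2 * real (m j) - 1 + of_int (e j)" if "j < k" for j
  proof -
    have "2 * int (m j) - 1 + e j \<ge> 0" using PosTuples_ge_1[OF m] e that unfolding k_def by force
    thus ?thesis using that unfolding odd_index_def by simp
  qed
  hence "(\<Sum>j<k. bs!j * real (odd_index k e m j)) = (\<Sum>j<k. bs!j * (2 * real (m j) - 1 + of_int (e j)))"
    by (intro sum.cong) auto
  also have "\<dots> = 2 * (\<Sum>j<k. bs!j * real (m j)) - (\<Sum>j<k. bs!j) + (\<Sum>j<k. bs!j * of_int (e j))"
    by (simp add: algebra_simps sum.distrib sum_subtractf sum_distrib_left)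
  finally have sum_eq: "(\<Sum>j<k. bs!j * real (odd_index k e m j)) = \<dots>" .
  show ?thesis
    unfolding Fsol_point_def shift_point_def lattice_point_def k_def[symmetric] sum_eq
    by (simp add: algebra_simps complex_eq_iff)
qed

lemma Fsol_terms_le_lattice_sum:
  assumes e: "\<forall>j<length bs. e j \<ge> -1"
    and sm: "(\<lambda>n. norm (f (lattice_point \<sigma> bs u n))) summable_on NatTuples (length bs)"
  shows "(\<lambda>m. norm (f (Fsol_point \<sigma> bs (shift_point \<sigma> bs u e) m))) summable_on PosTuples (length bs)"
    and "(\<Sum>\<^sub>\<infinity>m\<in>PosTuples (length bs). norm (f (Fsol_point \<sigma> bs (shift_point \<sigma> bs u e) m)))
          \<le> (\<Sum>\<^sub>\<infinity>n\<in>NatTuples (length bs). norm (f (lattice_point \<sigma> bs u n)))"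
proof -
  have sub: "odd_index (length bs) e ` PosTuples (length bs) \<subseteq> NatTuples (length bs)"
    using odd_index_in_NatTuples by blast
  note image = abs_summable_on_inj_image[OF inj_on_odd_index[OF e] sub sm]
  have eq: "norm (f (Fsol_point \<sigma> bs (shift_point \<sigma> bs u e) m))
      = norm (f (lattice_point \<sigma> bs u (odd_index (length bs) e m)))" if "m \<in> PosTuples (length bs)" for m
    using Fsol_point_shift_point[OF that e] by simp
  show "(\<lambda>m. norm (f (Fsol_point \<sigma> bs (shift_point \<sigma> bs u e) m))) summable_on PosTuples (length bs)"
    using summable_on_cong[OF eq] image(1) by (rule iffD2)
  show "(\<Sum>\<^sub>\<infinity>m\<in>PosTuples (length bs). norm (f (Fsol_point \<sigma> bs (shift_point \<sigma> bs u e) m)))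
          \<le> (\<Sum>\<^sub>\<infinity>n\<in>NatTuples (length bs). norm (f (lattice_point \<sigma> bs u n)))"
    using infsum_cong[OF eq] image(2) by (rule ord_eq_le_trans)
qed

lemma Fsol_terms_summable:
  fixes f :: "complex \<Rightarrow> complex" and A :: real
  assumes s: "\<sigma> \<in> {1,-1}" and K: "K > 0" and L: "L > 0"
    and fb: "\<forall>u\<in>Qreg \<sigma> K L. norm (f u) \<le> M * norm u powr (-A)"
    and pos: "\<forall>b\<in>set bs. b > 0" and A: "A > length bs"
    and u: "u \<in> Qreg \<sigma> K L" and e: "\<forall>j<length bs. e j \<ge> -1"
  shows "(\<lambda>m. f (Fsol_point \<sigma> bs (shift_point \<sigma> bs u e) m)) summable_on PosTuples (length bs)"
proof -
  obtain C where "\<forall>u\<in>Qreg \<sigma> K L. (\<lambda>n. norm (f (lattice_point \<sigma> bs u n))) summable_on NatTuples (length bs)"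
    using lattice_sum_bound[OF s K L fb pos A, of 0] A by auto
  hence "(\<lambda>m. norm (f (Fsol_point \<sigma> bs (shift_point \<sigma> bs u e) m))) summable_on PosTuples (length bs)"
    using Fsol_terms_le_lattice_sum(1)[OF e] u by blast
  thus ?thesis by (rule abs_summable_summable)
qed

lemma Fsol_decay:
  fixes f :: "complex \<Rightarrow> complex" and A B :: real
  assumes s: "\<sigma> \<in> {1,-1}" and K: "K > 0" and L: "L > 0"
    and fb: "\<forall>u\<in>Qreg \<sigma> K L. norm (f u) \<le> M * norm u powr (-A)"
    and pos: "\<forall>b\<in>set bs. b > 0" and A: "A > length bs" and B: "B < A - length bs"
  shows "\<exists>C. \<forall>u \<in> Qreg \<sigma> K L. norm (Fsol \<sigma> bs f u) \<le> C * norm u powr (- B)"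
proof -
  obtain C where C: "\<forall>u\<in>Qreg \<sigma> K L.
      (\<lambda>n. norm (f (lattice_point \<sigma> bs u n))) summable_on NatTuples (length bs)
    \<and> (\<Sum>\<^sub>\<infinity>n\<in>NatTuples (length bs). norm (f (lattice_point \<sigma> bs u n))) \<le> C * norm u powr (-B)"
    using lattice_sum_bound[OF s K L fb pos A B] by blast
  have "norm (Fsol \<sigma> bs f u) \<le> C * norm u powr (-B)" if u: "u \<in> Qreg \<sigma> K L" for u
  proof -
    note terms = Fsol_terms_le_lattice_sum[of bs "\<lambda>_. 0" f \<sigma> u, simplified]
    have "norm (Fsol \<sigma> bs f u) = norm (\<Sum>\<^sub>\<infinity>m\<in>PosTuples (length bs). f (Fsol_point \<sigma> bs u m))"
      using s by (auto simp: Fsol_eq_infsum norm_mult norm_power)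
    also have "\<dots> \<le> (\<Sum>\<^sub>\<infinity>m\<in>PosTuples (length bs). norm (f (Fsol_point \<sigma> bs u m)))"
      using terms(1) C u by (intro norm_infsum_bound) auto
    also have "\<dots> \<le> C * norm u powr (-B)"
      using terms(2) C u by force
    finally show ?thesis .
  qed
  thus ?thesis by blast
qed

lemma Fsol_point_Cons:
  "Fsol_point \<sigma> (a # as) w (case_nat n m) = Fsol_point \<sigma> as (w + \<i> * of_real (\<sigma> * a * pi * (2 * real n - 1))) m"
  unfolding Fsol_point_def length_Cons sum.lessThan_Suc_shift by (simp add: algebra_simps)

lemma case_nat_eq_iff: "(case_nat n m = case_nat n' m') \<longleftrightarrow> n = n' \<and> m = m'"
proof
  assume eq: "case_nat n m = case_nat n' m'"
  have "m j = m' j" for j using fun_cong[OF eq, of "Suc j"] by simp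
  thus "n = n' \<and> m = m'" using fun_cong[OF eq, of 0] by auto
qed simp

lemma bij_betw_case_nat_PosTuples:
  "bij_betw (\<lambda>(n, m). case_nat n m) ({0<..} \<times> PosTuples k) (PosTuples (Suc k))"
proof (rule bij_betwI')
  fix x y :: "nat \<times> (nat \<Rightarrow> nat)"
  show "((\<lambda>(n, m). case_nat n m) x = (\<lambda>(n, m). case_nat n m) y) = (x = y)"
    by (cases x, cases y) (simp add: case_nat_eq_iff)
next
  fix x :: "nat \<times> (nat \<Rightarrow> nat)" assume "x \<in> {0<..} \<times> PosTuples k"
  thus "(\<lambda>(n, m). case_nat n m) x \<in> PosTuples (Suc k)"
    unfolding PosTuples_def by (cases x) (auto simp: PiE_iff extensional_def split: nat.split)
next
  fix g assume g: "g \<in> PosTuples (Suc k)"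
  have "g = case_nat (g 0) (\<lambda>i. g (Suc i))" by (rule ext) (simp split: nat.split)
  moreover have "(g 0, \<lambda>i. g (Suc i)) \<in> {0<..} \<times> PosTuples k"
    using g unfolding PosTuples_def by (auto simp: PiE_iff extensional_def)
  ultimately show "\<exists>x\<in>{0<..} \<times> PosTuples k. g = (\<lambda>(n, m). case_nat n m) x" by auto
qed

text \<open>Fubini in the first summation index.\<close>
lemma Fsol_Cons:
  assumes "(\<lambda>m. f (Fsol_point \<sigma> (a # as) w m)) summable_on PosTuples (Suc (length as))"
  shows "(\<lambda>n. Fsol \<sigma> as f (w + \<i> * of_real (\<sigma> * a * pi * (2 * real n - 1)))) summable_on {0<..}"
    and "Fsol \<sigma> (a # as) f w = - of_real \<sigma> * (\<Sum>\<^sub>\<infinity>n\<in>{0<..}. Fsol \<sigma> as f (w + \<i> * of_real (\<sigma> * a * pi * (2 * real n - 1))))"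
proof -
  define k where "k = length as"
  define v where "v n = w + \<i> * of_real (\<sigma> * a * pi * (2 * real n - 1))" for n :: nat
  note bij = bij_betw_case_nat_PosTuples[of k]
  have summable: "(\<lambda>(n, m). f (Fsol_point \<sigma> as (v n) m)) summable_on {0<..} \<times> PosTuples k"
    using assms summable_on_reindex_bij_betw[OF bij, of "\<lambda>g. f (Fsol_point \<sigma> (a # as) w g)"]
    unfolding k_def v_def by (simp add: case_prod_unfold Fsol_point_Cons)
  have Fsol_v: "Fsol \<sigma> as f (v n) = of_real ((- \<sigma>) ^ k) * (\<Sum>\<^sub>\<infinity>m\<in>PosTuples k. f (Fsol_point \<sigma> as (v n) m))" for n
    unfolding Fsol_eq_infsum k_def ..
  have "(\<lambda>n. \<Sum>\<^sub>\<infinity>m\<in>PosTuples k. f (Fsol_point \<sigma> as (v n) m)) summable_on {0<..}"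
    using summable_on_Sigma_banach[OF summable] by simp
  thus "(\<lambda>n. Fsol \<sigma> as f (w + \<i> * of_real (\<sigma> * a * pi * (2 * real n - 1)))) summable_on {0<..}"
    unfolding Fsol_v[unfolded v_def] v_def by (rule summable_on_cmult_right)
  have "(\<Sum>\<^sub>\<infinity>g\<in>PosTuples (Suc k). f (Fsol_point \<sigma> (a # as) w g))
      = (\<Sum>\<^sub>\<infinity>(n, m)\<in>{0<..} \<times> PosTuples k. f (Fsol_point \<sigma> as (v n) m))"
    using infsum_reindex_bij_betw[OF bij, of "\<lambda>g. f (Fsol_point \<sigma> (a # as) w g)", symmetric]
    unfolding v_def by (simp add: case_prod_unfold Fsol_point_Cons)
  also have "\<dots> = (\<Sum>\<^sub>\<infinity>n\<in>{0<..}. \<Sum>\<^sub>\<infinity>m\<in>PosTuples k. f (Fsol_point \<sigma> as (v n) m))"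
    using infsum_Sigma'_banach[OF summable] by simp
  finally have Fubini: "(\<Sum>\<^sub>\<infinity>g\<in>PosTuples (Suc k). f (Fsol_point \<sigma> (a # as) w g)) = \<dots>" .
  have "Fsol \<sigma> (a # as) f w
      = of_real (- \<sigma>) * (of_real ((- \<sigma>) ^ k) * (\<Sum>\<^sub>\<infinity>n\<in>{0<..}. \<Sum>\<^sub>\<infinity>m\<in>PosTuples k. f (Fsol_point \<sigma> as (v n) m)))"
    unfolding Fsol_eq_infsum length_Cons k_def[symmetric] Fubini by simp
  also have "\<dots> = - of_real \<sigma> * (\<Sum>\<^sub>\<infinity>n\<in>{0<..}. Fsol \<sigma> as f (v n))"
    unfolding Fsol_v by (simp add: infsum_cmult_right')
  finally show "Fsol \<sigma> (a # as) f w = - of_real \<sigma> * (\<Sum>\<^sub>\<infinity>n\<in>{0<..}. Fsol \<sigma> as f (w + \<i> * of_real (\<sigma> * a * pi * (2 * real n - 1))))"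
    unfolding v_def .
qed

lemma Delta_eq_sigma:
  assumes "\<sigma> \<in> {1,-1}"
  shows "Delta a F v = of_real \<sigma> * (F (v + \<i> * of_real (\<sigma> * a * pi)) - F (v - \<i> * of_real (\<sigma> * a * pi)))"
  using assms by (auto simp: Delta_def algebra_simps)

text \<open>With \<open>g n\<close> the value of \<open>Fsol\<close> for \<open>as\<close> at \<open>v + 2 \<sigma> a \<pi> n \<i>\<close>, the two values of \<open>Fsol\<close> for
  \<open>a # as\<close> entering \<open>Delta a\<close> are \<open>-\<sigma>\<close> times the sums of \<open>g\<close> over \<open>n > 0\<close> and over \<open>n \<ge> 0\<close>:
  they telescope to \<open>g 0\<close>.\<close>
lemma Delta_Fsol_Cons:
  assumes s: "\<sigma> \<in> {1,-1}"
    and plus: "(\<lambda>m. f (Fsol_point \<sigma> (a # as) (v + \<i> * of_real (\<sigma> * a * pi)) m)) summable_on PosTuples (Suc (length as))"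
    and minus: "(\<lambda>m. f (Fsol_point \<sigma> (a # as) (v - \<i> * of_real (\<sigma> * a * pi)) m)) summable_on PosTuples (Suc (length as))"
  shows "Delta a (Fsol \<sigma> (a # as) f) v = Fsol \<sigma> as f v"
proof -
  define g where "g n = Fsol \<sigma> as f (v + \<i> * of_real (\<sigma> * a * pi * (2 * real n)))" for n :: nat
  have plus_eq: "v + \<i> * of_real (\<sigma> * a * pi) + \<i> * of_real (\<sigma> * a * pi * (2 * real n - 1))
      = v + \<i> * of_real (\<sigma> * a * pi * (2 * real n))" for n
    by (simp add: algebra_simps)
  have minus_eq: "v - \<i> * of_real (\<sigma> * a * pi) + \<i> * of_real (\<sigma> * a * pi * (2 * real n - 1))
      = v + \<i> * of_real (\<sigma> * a * pi * (2 * real (n - 1)))" if "n \<in> {0<..}" for n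
    using that by (simp add: algebra_simps of_nat_diff)
  have F_plus: "Fsol \<sigma> (a # as) f (v + \<i> * of_real (\<sigma> * a * pi)) = - of_real \<sigma> * (\<Sum>\<^sub>\<infinity>n\<in>{0<..}. g n)"
    unfolding Fsol_Cons(2)[OF plus] plus_eq g_def ..
  have "Fsol \<sigma> (a # as) f (v - \<i> * of_real (\<sigma> * a * pi)) = - of_real \<sigma> * (\<Sum>\<^sub>\<infinity>n\<in>{0<..}. g (n - 1))"
    unfolding Fsol_Cons(2)[OF minus] g_def by (intro arg_cong[where f="(*) _"] infsum_cong) (simp only: minus_eq)
  also have "(\<Sum>\<^sub>\<infinity>n\<in>{0<..}. g (n - 1)) = g 0 + (\<Sum>\<^sub>\<infinity>n\<in>{0<..}. g n)"
    using Fsol_Cons(1)[OF minus] unfolding g_def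
    by (intro infsum_pred_shift) (subst (asm) summable_on_cong, simp only: minus_eq)
  finally have F_minus: "Fsol \<sigma> (a # as) f (v - \<i> * of_real (\<sigma> * a * pi)) = - of_real \<sigma> * (g 0 + (\<Sum>\<^sub>\<infinity>n\<in>{0<..}. g n))" .
  have "Delta a (Fsol \<sigma> (a # as) f) v = of_real (\<sigma> * \<sigma>) * g 0"
    unfolding Delta_eq_sigma[OF s] F_plus F_minus by (simp add: algebra_simps)
  thus ?thesis using s unfolding g_def by auto
qed

lemma Delta_commute: "Delta a (Delta b H) = Delta b (Delta a H)"
  by (simp add: fun_eq_iff Delta_def algebra_simps)

lemma DeltaL_Delta_commute: "DeltaL bs (Delta a H) = Delta a (DeltaL bs H)"
  by (induction bs) (simp_all add: Delta_commute)

lemma DeltaL_cong_vertices: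
  assumes "\<And>d. \<forall>j<length bs. d j \<in> {-1, 1} \<Longrightarrow> H (shift_point 1 bs u d) = H' (shift_point 1 bs u d)"
  shows "DeltaL bs H u = DeltaL bs H' u"
  using assms
proof (induction bs arbitrary: u)
  case Nil
  thus ?case using Nil[of "\<lambda>_. 0"] by (simp add: shift_point_def)
next
  case (Cons b bs)
  have "DeltaL bs H (u + \<i> * of_real (b * pi * of_int x)) = DeltaL bs H' (u + \<i> * of_real (b * pi * of_int x))"
    if x: "x \<in> {-1, 1}" for x
  proof (rule Cons.IH)
    fix d :: "nat \<Rightarrow> int" assume d: "\<forall>j<length bs. d j \<in> {-1, 1}"
    have "\<forall>j<length (b # bs). case_nat x d j \<in> {-1, 1}" using x d by (auto simp: less_Suc_eq_0_disj)
    from Cons.prems[OF this]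
    show "H (shift_point 1 bs (u + \<i> * of_real (b * pi * of_int x)) d)
        = H' (shift_point 1 bs (u + \<i> * of_real (b * pi * of_int x)) d)"
      by (simp add: shift_point_Cons)
  qed
  from this[of 1] this[of "-1"] show ?case by (simp add: Delta_def)
qed

lemma Delta_Fsol_Cons_at_vertex:
  fixes f :: "complex \<Rightarrow> complex" and A :: real
  assumes s: "\<sigma> \<in> {1,-1}" and K: "K > 0" and L: "L > 0"
    and fb: "\<forall>u\<in>Qreg \<sigma> K L. norm (f u) \<le> M * norm u powr (-A)"
    and pos: "\<forall>b\<in>set (a # as). b > 0" and A: "A > length (a # as)" and u: "u \<in> Qreg \<sigma> K L"
    and d: "\<forall>j<length as. d j \<in> {-1, 1}"
  shows "Delta a (Fsol \<sigma> (a # as) f) (shift_point 1 as u d) = Fsol \<sigma> as f (shift_point 1 as u d)"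
proof (rule Delta_Fsol_Cons[OF s])
  obtain t :: int where t: "\<sigma> = of_int t" "t \<in> {1, -1}" using s that[of 1] that[of "-1"] by auto
  have "shift_point 1 as u d = shift_point \<sigma> as u (\<lambda>j. t * d j)"
    using t unfolding shift_point_def by (auto simp: algebra_simps sum_negf)
  hence at_vertex: "shift_point 1 as u d + \<i> * of_real (\<sigma> * a * pi * of_int x)
      = shift_point \<sigma> (a # as) u (case_nat x (\<lambda>j. t * d j))" for x
    unfolding shift_point_Cons by (simp add: shift_point_def algebra_simps)
  have "(\<lambda>m. f (Fsol_point \<sigma> (a # as) (shift_point \<sigma> (a # as) u (case_nat x (\<lambda>j. t * d j))) m))
      summable_on PosTuples (Suc (length as))" if x: "x \<in> {1, -1}" for x
  proof -
    have "\<forall>j<length (a # as). case_nat x (\<lambda>j. t * d j) j \<ge> -1"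
      using x d t by (auto simp: less_Suc_eq_0_disj)
    from Fsol_terms_summable[OF s K L fb pos A u this] show ?thesis by simp
  qed
  from this[of 1] this[of "-1"]
  show "(\<lambda>m. f (Fsol_point \<sigma> (a # as) (shift_point 1 as u d + \<i> * of_real (\<sigma> * a * pi)) m))
      summable_on PosTuples (Suc (length as))"
    and "(\<lambda>m. f (Fsol_point \<sigma> (a # as) (shift_point 1 as u d - \<i> * of_real (\<sigma> * a * pi)) m))
      summable_on PosTuples (Suc (length as))"
    using at_vertex[of 1] at_vertex[of "-1"] by (simp_all add: algebra_simps)
qed

lemma DeltaL_Fsol:
  fixes f :: "complex \<Rightarrow> complex" and A :: real
  assumes s: "\<sigma> \<in> {1,-1}" and K: "K > 0" and L: "L > 0"
    and fb: "\<forall>u\<in>Qreg \<sigma> K L. norm (f u) \<le> M * norm u powr (-A)"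
    and pos: "\<forall>b\<in>set bs. b > 0" and A: "A > length bs" and u: "u \<in> Qreg \<sigma> K L"
  shows "DeltaL bs (Fsol \<sigma> bs f) u = f u"
  using pos A u
proof (induction bs arbitrary: u)
  case Nil
  show ?case by (simp add: Fsol_eq_infsum Fsol_point_def PosTuples_def)
next
  case (Cons a as)
  have "DeltaL (a # as) (Fsol \<sigma> (a # as) f) u = DeltaL as (Delta a (Fsol \<sigma> (a # as) f)) u"
    by (simp add: DeltaL_Delta_commute)
  also have "\<dots> = DeltaL as (Fsol \<sigma> as f) u"
    using Delta_Fsol_Cons_at_vertex[OF s K L fb Cons.prems] by (rule DeltaL_cong_vertices)
  also have "\<dots> = f u" using Cons by simp
  finally show ?case .
qed

theorem lemma14:
  fixes as :: "real list" and K L M A \<sigma> :: real and f :: "complex \<Rightarrow> complex"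
  assumes "\<sigma> \<in> {1, -1}"
    and "\<forall>a \<in> set as. a > 0"
    and "K > 0" and "L > 0"
    and "f holomorphic_on Qreg \<sigma> K L"
    and "\<forall>u \<in> Qreg \<sigma> K L. norm (f u) \<le> M * norm u powr (- A)"
    and "A > real (length as)"
  shows "(\<forall>u \<in> Qreg \<sigma> K L.
            (\<lambda>m. f (u + of_real \<sigma> * 2 * of_real pi * \<i> * of_real (\<Sum>j<length as. as ! j * real (m j))
                     - of_real \<sigma> * of_real pi * \<i> * of_real (\<Sum>j<length as. as ! j)))
            summable_on PosTuples (length as))
       \<and> (\<forall>u \<in> Qreg \<sigma> K L. DeltaL as (Fsol \<sigma> as f) u = f u)
       \<and> (\<forall>B. B < A - real (length as) \<longrightarrow>
            (\<exists>C. \<forall>u \<in> Qreg \<sigma> K L. norm (Fsol \<sigma> as f u) \<le> C * norm u powr (- B)))"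
proof -
  note hyps = assms(1,3,4,6,2) and A = assms(7)
  have "(\<lambda>m. f (Fsol_point \<sigma> as u m)) summable_on PosTuples (length as)" if "u \<in> Qreg \<sigma> K L" for u
    using Fsol_terms_summable[OF hyps A that, of "\<lambda>_. 0"] by simp
  thus ?thesis
    using DeltaL_Fsol[OF hyps A] Fsol_decay[OF hyps A] unfolding Fsol_point_def by blast
qed

end
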